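(* Let $x_1,\dots,x_n\in\mathbb{R}^p$, let $u_1,\dots,u_s$ be points chosen from $\{x_1,\dots,x_n\}$, and let $k$ be a nonnegative base kernel such that all normalizing sums below are positive. For $1\le j\le s$ let $n_j$ be the number of $x_i$ whose nearest induced point is $u_j$. Define for $1\le i\le n$, $1\le j\le s$: $$A_{ij}=\frac{n_jk(x_i,u_j)}{\sum_{q=1}^nk(x_q,u_j)\sum_{q=1}^sn_qk(x_i,u_q)},\qquad Z_{ij}=\frac{A_{ij}}{\sum_{l=1}^sA_{il}},$$ let $\Lambda$ be the $s\times s$ diagonal matrix with $\Lambda_{jj}=\sum_{i=1}^nZ_{ij}$, and $L=I-(Z\Lambda^{-1}Z^\top)^{1/2}$ (with the positive semidefinite square root). Then the eigenvalues of $L$ are real and lie in $[0,1]$; in particular $0$ is the smallest eigenvalue of $L$. *)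

theory Defs
  imports "HOL-Analysis.Analysis"
begin

text \<open>Points x_1..x_n are indexed by the finite type 'n, induced points u_1..u_s by 's,
  and R^p is real^'p. The assignment c i is the (index of the) nearest induced point of x i.\<close>

definition cluster_size :: "('n::finite \<Rightarrow> 's) \<Rightarrow> 's \<Rightarrow> nat" where
  "cluster_size c j = card {i. c i = j}"

definition A_mat ::
  "(real^'p::finite \<Rightarrow> real^'p \<Rightarrow> real) \<Rightarrow> ('n::finite \<Rightarrow> real^'p) \<Rightarrow> ('s::finite \<Rightarrow> real^'p)
   \<Rightarrow> ('n \<Rightarrow> 's) \<Rightarrow> real^'s^'n" where
  "A_mat k x u c = (\<chi> i j. real (cluster_size c j) * k (x i) (u j) /
      ((\<Sum>q\<in>UNIV. k (x q) (u j)) * (\<Sum>q\<in>UNIV. real (cluster_size c q) * k (x i) (u q))))"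

definition Z_mat ::
  "(real^'p::finite \<Rightarrow> real^'p \<Rightarrow> real) \<Rightarrow> ('n::finite \<Rightarrow> real^'p) \<Rightarrow> ('s::finite \<Rightarrow> real^'p)
   \<Rightarrow> ('n \<Rightarrow> 's) \<Rightarrow> real^'s^'n" where
  "Z_mat k x u c = (\<chi> i j. A_mat k x u c $ i $ j / (\<Sum>l\<in>UNIV. A_mat k x u c $ i $ l))"

definition Lambda_mat ::
  "(real^'p::finite \<Rightarrow> real^'p \<Rightarrow> real) \<Rightarrow> ('n::finite \<Rightarrow> real^'p) \<Rightarrow> ('s::finite \<Rightarrow> real^'p)
   \<Rightarrow> ('n \<Rightarrow> 's) \<Rightarrow> real^'s^'s" where
  "Lambda_mat k x u c = (\<chi> j l. if j = l then (\<Sum>i\<in>UNIV. Z_mat k x u c $ i $ j) else 0)"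

definition psd_mat :: "real^'n^'n \<Rightarrow> bool" where
  "psd_mat M \<longleftrightarrow> transpose M = M \<and> (\<forall>v. 0 \<le> v \<bullet> (M *v v))"

definition psd_sqrt :: "real^'n^'n \<Rightarrow> real^'n^'n" where
  "psd_sqrt M = (THE R. psd_mat R \<and> R ** R = M)"

definition L_mat ::
  "(real^'p::finite \<Rightarrow> real^'p \<Rightarrow> real) \<Rightarrow> ('n::finite \<Rightarrow> real^'p) \<Rightarrow> ('s::finite \<Rightarrow> real^'p)
   \<Rightarrow> ('n \<Rightarrow> 's) \<Rightarrow> real^'n^'n" where
  "L_mat k x u c = mat 1 - psd_sqrt (Z_mat k x u c ** matrix_inv (Lambda_mat k x u c)
                                      ** transpose (Z_mat k x u c))"

definition cmat :: "real^'n^'m \<Rightarrow> complex^'n^'m" where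
  "cmat M = (\<chi> i j. complex_of_real (M $ i $ j))"

definition is_ceigenvalue :: "real^'n^'n \<Rightarrow> complex \<Rightarrow> bool" where
  "is_ceigenvalue M \<mu> \<longleftrightarrow> (\<exists>v. v \<noteq> 0 \<and> cmat M *v v = \<mu> *s v)"

end

theory Submission
  imports Defs
begin

text \<open>The rows of Z are probability vectors, so W = Z \<Lambda>^-1 Z^T is positive semidefinite,
  fixes the all-ones vector, and by a weighted Cauchy-Schwarz inequality satisfies
  v \<bullet> W v \<le> v \<bullet> v. Its positive semidefinite square root S, obtained from an orthonormal
  eigenbasis of W, inherits all three properties, so L = I - S is symmetric with
  0 \<le> v \<bullet> L v \<le> v \<bullet> v and annihilates the all-ones vector. A symmetric real matrix has only
  real eigenvalues, and they lie between the bounds of its quadratic form on unit vectors.\<close>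

lemma inner_matrix_vector_mult:
  fixes A :: "real^'n^'m"
  shows "x \<bullet> (A *v y) = (transpose A *v x) \<bullet> y"
  by (metis dot_lmul_matrix vector_transpose_matrix transpose_transpose)

lemma symmetric_matrix_inner:
  fixes A :: "real^'n^'n"
  assumes "transpose A = A"
  shows "(A *v x) \<bullet> y = x \<bullet> (A *v y)"
  using inner_matrix_vector_mult[of x A y] assms by simp

lemma linear_coeff_zero_if_quadratic_nonpos:
  fixes a b :: real
  assumes "\<And>t. 2 * t * a + t\<^sup>2 * b \<le> 0"
  shows "a = 0"
proof -
  define s where "s = 1 / (\<bar>b\<bar> + 1)"
  have s: "0 < s" "s * \<bar>b\<bar> < 1"
    by (simp_all add: s_def field_simps)
  then have "- 1 < s * b"
    using mult_left_mono[of "- b" "\<bar>b\<bar>" s] by linarith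
  then have pos: "0 < s * (2 + s * b)"
    using s(1) by (intro mult_pos_pos) linarith+
  have "a\<^sup>2 * (s * (2 + s * b)) = 2 * (s * a) * a + (s * a)\<^sup>2 * b"
    by (simp add: power2_eq_square algebra_simps)
  also have "\<dots> \<le> 0" by (rule assms)
  finally have "a\<^sup>2 \<le> 0"
    using pos mult_le_0_iff[of "a\<^sup>2" "s * (2 + s * b)"] by linarith
  then show ?thesis by simp
qed

text \<open>A maximiser of the Rayleigh quotient on an invariant subspace is an eigenvector:
  perturbing it along an orthogonal direction w cannot increase the quotient, so the first
  order term w \<bullet> (A *v u) vanishes.\<close>
lemma symmetric_matrix_rayleigh_max_eigenvector:
  fixes A :: "real^'n^'n"
  assumes symA: "transpose A = A" and V: "subspace V"
    and inv: "\<And>v. v \<in> V \<Longrightarrow> A *v v \<in> V"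
    and u: "u \<in> V" "norm u = 1"
    and max: "\<And>w. w \<in> V \<Longrightarrow> norm w = 1 \<Longrightarrow> w \<bullet> (A *v w) \<le> u \<bullet> (A *v u)"
  shows "A *v u = (u \<bullet> (A *v u)) *\<^sub>R u"
proof -
  define l where "l = u \<bullet> (A *v u)"
  have uu: "u \<bullet> u = 1" using u(2) by (simp add: norm_eq_1)
  have max_scaled: "w \<bullet> (A *v w) \<le> l * (w \<bullet> w)" if "w \<in> V" for w
  proof (cases "w = 0")
    case False
    have "(w /\<^sub>R norm w) \<bullet> (A *v (w /\<^sub>R norm w)) \<le> l"
      using max[of "w /\<^sub>R norm w"] that False V by (simp add: l_def subspace_scale)
    then show ?thesis
      using False by (simp add: matrix_vector_mult_scaleR field_simps dot_square_norm
          power2_eq_square)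
  qed simp
  have orth: "w \<bullet> (A *v u) = 0" if w: "w \<in> V" "w \<bullet> u = 0" for w
  proof (rule linear_coeff_zero_if_quadratic_nonpos)
    fix t :: real
    have "u + t *\<^sub>R w \<in> V" using w u V by (simp add: subspace_add subspace_scale)
    then have le: "(u + t *\<^sub>R w) \<bullet> (A *v (u + t *\<^sub>R w))
        \<le> l * ((u + t *\<^sub>R w) \<bullet> (u + t *\<^sub>R w))"
      by (rule max_scaled)
    have "u \<bullet> (A *v w) = w \<bullet> (A *v u)"
      using symmetric_matrix_inner[OF symA, of u w] by (simp add: inner_commute)
    then have "(u + t *\<^sub>R w) \<bullet> (A *v (u + t *\<^sub>R w))
        = l + 2 * t * (w \<bullet> (A *v u)) + t\<^sup>2 * (w \<bullet> (A *v w))"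
      by (simp add: l_def matrix_vector_right_distrib matrix_vector_mult_scaleR
          inner_add_left inner_add_right power2_eq_square algebra_simps)
    moreover have "(u + t *\<^sub>R w) \<bullet> (u + t *\<^sub>R w) = 1 + t\<^sup>2 * (w \<bullet> w)"
      using uu w(2) by (simp add: inner_add_left inner_add_right power2_eq_square inner_commute
          algebra_simps)
    ultimately show "2 * t * (w \<bullet> (A *v u)) + t\<^sup>2 * (w \<bullet> (A *v w) - l * (w \<bullet> w)) \<le> 0"
      using le by (simp add: algebra_simps)
  qed
  define w where "w = A *v u - l *\<^sub>R u"
  have "w \<in> V" using inv u V by (simp add: w_def subspace_diff subspace_scale)
  moreover have wu: "w \<bullet> u = 0"
    using uu by (simp add: w_def l_def inner_diff_left inner_diff_right inner_commute)
  ultimately have "w \<bullet> (A *v u) = 0" by (rule orth)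
  then have "w \<bullet> w = 0" using wu by (simp add: w_def inner_diff_right)
  then have "A *v u = l *\<^sub>R u" by (simp add: w_def)
  then show ?thesis unfolding l_def .
qed

lemma symmetric_matrix_invariant_subspace_eigenvector:
  fixes A :: "real^'n^'n"
  assumes symA: "transpose A = A" and V: "subspace V" "V \<noteq> {0}"
    and inv: "\<And>v. v \<in> V \<Longrightarrow> A *v v \<in> V"
  obtains u l where "u \<in> V" "norm u = 1" "A *v u = l *\<^sub>R u"
proof -
  obtain v where v: "v \<in> V" "v \<noteq> 0"
    using V subspace_0 by blast
  let ?K = "sphere 0 1 \<inter> V"
  have "v /\<^sub>R norm v \<in> ?K"
    using v V by (simp add: subspace_scale)
  then have "?K \<noteq> {}" by blast
  moreover have "compact ?K"
    using V by (simp add: compact_Int_closed closed_subspace)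
  moreover have "continuous_on ?K (\<lambda>w. w \<bullet> (A *v w))"
    by (intro continuous_intros linear_continuous_on matrix_vector_mul_bounded_linear)
  ultimately obtain u where "u \<in> ?K" and "\<forall>w\<in>?K. w \<bullet> (A *v w) \<le> u \<bullet> (A *v u)"
    using continuous_attains_sup by blast
  then have u: "u \<in> V" "norm u = 1"
    and max: "\<And>w. w \<in> V \<Longrightarrow> norm w = 1 \<Longrightarrow> w \<bullet> (A *v w) \<le> u \<bullet> (A *v u)"
    by auto
  show thesis
    by (rule that[OF u symmetric_matrix_rayleigh_max_eigenvector[OF symA V(1) inv u max]])
qed

lemma symmetric_matrix_invariant_subspace_eigenbasis:
  fixes A :: "real^'n^'n"
  assumes symA: "transpose A = A"
  shows "subspace V \<Longrightarrow> (\<And>v. v \<in> V \<Longrightarrow> A *v v \<in> V) \<Longrightarrow>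
    \<exists>B. B \<subseteq> V \<and> finite B \<and> pairwise orthogonal B \<and> V \<subseteq> span B \<and>
        (\<forall>b\<in>B. norm b = 1 \<and> (\<exists>l. A *v b = l *\<^sub>R b))"
proof (induction "dim V" arbitrary: V rule: less_induct)
  case less
  note V = less.prems(1) and inv = less.prems(2)
  show ?case
  proof (cases "V = {0}")
    case True
    then show ?thesis by (intro exI[of _ "{}"]) auto
  next
    case False
    then obtain u l where u: "u \<in> V" "norm u = 1" "A *v u = l *\<^sub>R u"
      using symmetric_matrix_invariant_subspace_eigenvector[OF symA V _ inv] by blast
    define W where "W = {w\<in>V. w \<bullet> u = 0}"
    have W: "subspace W"
      using V by (auto simp: W_def subspace_def inner_add_left)
    have invW: "A *v w \<in> W" if "w \<in> W" for w
    proof -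
      from that have w: "w \<in> V" "w \<bullet> u = 0" by (auto simp: W_def)
      have "(A *v w) \<bullet> u = w \<bullet> (A *v u)" by (rule symmetric_matrix_inner[OF symA])
      also have "\<dots> = 0" using w(2) u(3) by simp
      finally show ?thesis using w inv by (simp add: W_def)
    qed
    have "W \<subseteq> V" by (auto simp: W_def)
    moreover have "u \<notin> W" using u by (simp add: W_def norm_eq_1)
    ultimately have "dim W < dim V"
      using subspace_dim_equal[OF W V] u(1) by (metis not_le)
    then obtain B where B: "B \<subseteq> W" "finite B" "pairwise orthogonal B" "W \<subseteq> span B"
        "\<forall>b\<in>B. norm b = 1 \<and> (\<exists>l. A *v b = l *\<^sub>R b)"
      using less.hyps[OF _ W invW] by blast
    have "V \<subseteq> span (insert u B)"
    proof
      fix v assume "v \<in> V"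
      then have "v - (v \<bullet> u) *\<^sub>R u \<in> W"
        using u V by (simp add: W_def subspace_diff subspace_scale inner_diff_left norm_eq_1)
      then have "v - (v \<bullet> u) *\<^sub>R u \<in> span (insert u B)"
        using B(4) span_mono[of B "insert u B"] by blast
      moreover have "(v \<bullet> u) *\<^sub>R u \<in> span (insert u B)"
        by (simp add: span_base span_mul)
      ultimately show "v \<in> span (insert u B)"
        by (metis diff_add_cancel span_add)
    qed
    moreover have "pairwise orthogonal (insert u B)"
      using B(1,3) by (auto simp: pairwise_insert W_def orthogonal_def inner_commute)
    moreover have "insert u B \<subseteq> V" using B(1) \<open>W \<subseteq> V\<close> u(1) by blast
    moreover have "\<forall>b\<in>insert u B. norm b = 1 \<and> (\<exists>l. A *v b = l *\<^sub>R b)"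
      using B(5) u(2,3) by blast
    moreover have "finite (insert u B)" using B(2) by simp
    ultimately show ?thesis by (intro exI conjI)
  qed
qed

lemma symmetric_matrix_orthonormal_eigenbasis:
  fixes A :: "real^'n^'n"
  assumes "transpose A = A"
  obtains B lam where "finite B" "span B = UNIV"
    "\<And>b c. b \<in> B \<Longrightarrow> c \<in> B \<Longrightarrow> b \<bullet> c = (if b = c then 1 else 0)"
    "\<And>b. b \<in> B \<Longrightarrow> A *v b = lam b *\<^sub>R b"
proof -
  obtain B where B: "finite B" "pairwise orthogonal B" "UNIV \<subseteq> span B"
      "\<forall>b\<in>B. norm b = 1 \<and> (\<exists>l. A *v b = l *\<^sub>R b)"
    using symmetric_matrix_invariant_subspace_eigenbasis[OF assms, of UNIV] by auto
  then obtain lam where lam: "\<And>b. b \<in> B \<Longrightarrow> A *v b = lam b *\<^sub>R b"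
    by metis
  have orth: "b \<bullet> c = (if b = c then 1 else 0)" if "b \<in> B" "c \<in> B" for b c
    using that B(2,4) by (simp add: pairwise_def orthogonal_def norm_eq_1)
  have "span B = UNIV" using B(3) by blast
  then show thesis by (rule that[OF B(1) _ orth lam])
qed

lemma matrix_eq_on_spanning_set:
  fixes P Q :: "real^'n^'m"
  assumes "span B = UNIV" and "\<And>b. b \<in> B \<Longrightarrow> P *v b = Q *v b"
  shows "P = Q"
  using real_vector.linear_eq_on[OF matrix_vector_mul_linear matrix_vector_mul_linear, of _ B]
    assms by (auto simp: matrix_eq)

lemma rank_one_sum_mult_vector:
  fixes B :: "(real^'n) set"
  shows "(\<chi> i j. \<Sum>b\<in>B. f b * b$i * b$j) *v v = (\<Sum>b\<in>B. (f b * (b \<bullet> v)) *\<^sub>R b)"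
proof -
  have "(\<Sum>j\<in>UNIV. (\<Sum>b\<in>B. f b * b$i * b$j) * v$j) = (\<Sum>b\<in>B. f b * (b \<bullet> v) * b$i)" for i
  proof -
    have "(\<Sum>j\<in>UNIV. (\<Sum>b\<in>B. f b * b$i * b$j) * v$j)
        = (\<Sum>j\<in>UNIV. \<Sum>b\<in>B. f b * b$i * (b$j * v$j))"
      by (simp add: sum_distrib_right mult.assoc)
    also have "\<dots> = (\<Sum>b\<in>B. \<Sum>j\<in>UNIV. f b * b$i * (b$j * v$j))"
      by (rule sum.swap)
    also have "\<dots> = (\<Sum>b\<in>B. f b * (b \<bullet> v) * b$i)"
      by (simp add: inner_vec_def sum_distrib_left mult_ac)
    finally show ?thesis .
  qed
  then show ?thesis
    by (simp add: vec_eq_iff sum_component matrix_vector_mult_def)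
qed

text \<open>For l > 0, S b - sqrt l b is an eigenvector of S for the negative eigenvalue - sqrt l
  unless it vanishes; for l = 0, |S b|^2 = b \<bullet> M b = 0.\<close>
lemma psd_root_eigenvector:
  fixes S M :: "real^'n^'n"
  assumes S: "psd_mat S" and SS: "S ** S = M" and ev: "M *v b = l *\<^sub>R b" and l: "0 \<le> l"
  shows "S *v b = sqrt l *\<^sub>R b"
proof (cases "l = 0")
  case True
  have "(S *v b) \<bullet> (S *v b) = b \<bullet> (M *v b)"
    using S SS symmetric_matrix_inner[of S b "S *v b"]
    by (simp add: psd_mat_def matrix_vector_mul_assoc)
  then show ?thesis using True ev by simp
next
  case False
  define y where "y = S *v b - sqrt l *\<^sub>R b"
  have "sqrt l * sqrt l = l" using l by simp
  then have "S *v y = - sqrt l *\<^sub>R y"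
    using SS ev by (simp add: y_def matrix_vector_mul_assoc matrix_vector_mult_diff_distrib
        matrix_vector_mult_scaleR algebra_simps)
  moreover have "0 \<le> y \<bullet> (S *v y)" using S by (simp add: psd_mat_def)
  ultimately have "sqrt l * (y \<bullet> y) \<le> 0" by simp
  then have "y \<bullet> y \<le> 0"
    using False l by (simp add: mult_le_0_iff)
  then have "y \<bullet> y = 0" using inner_ge_zero[of y] by linarith
  then show ?thesis by (simp add: y_def)
qed

lemma psd_mat_sqrt_ex1:
  fixes M :: "real^'n^'n"
  assumes M: "psd_mat M"
  shows "\<exists>!S. psd_mat S \<and> S ** S = M"
proof -
  have "transpose M = M" using M by (simp add: psd_mat_def)
  then obtain B lam where B: "finite B" "span B = UNIV"
    and orth: "\<And>b c. b \<in> B \<Longrightarrow> c \<in> B \<Longrightarrow> b \<bullet> c = (if b = c then 1 else 0)"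
    and ev: "\<And>b. b \<in> B \<Longrightarrow> M *v b = lam b *\<^sub>R b"
    using symmetric_matrix_orthonormal_eigenbasis by blast
  have lam: "0 \<le> lam b" if "b \<in> B" for b
  proof -
    have "lam b = b \<bullet> (M *v b)" using ev[OF that] orth[OF that that] by simp
    then show ?thesis using M by (simp add: psd_mat_def)
  qed
  define R :: "real^'n^'n" where "R = (\<chi> i j. \<Sum>b\<in>B. sqrt (lam b) * b$i * b$j)"
  have R: "R *v c = sqrt (lam c) *\<^sub>R c" if "c \<in> B" for c
  proof -
    have "R *v c = (\<Sum>b\<in>B. if b = c then sqrt (lam c) *\<^sub>R c else 0)"
      unfolding R_def rank_one_sum_mult_vector by (rule sum.cong) (auto simp: orth that)
    also have "\<dots> = sqrt (lam c) *\<^sub>R c" using B(1) that by simp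
    finally show ?thesis .
  qed
  have "psd_mat R"
    unfolding psd_mat_def
  proof (intro conjI allI)
    show "transpose R = R" by (simp add: R_def transpose_def vec_eq_iff mult_ac)
    fix v :: "real^'n"
    have "v \<bullet> (R *v v) = (\<Sum>b\<in>B. sqrt (lam b) * (b \<bullet> v)\<^sup>2)"
      unfolding R_def rank_one_sum_mult_vector
      by (simp add: inner_sum_right inner_commute power2_eq_square mult_ac)
    also have "\<dots> \<ge> 0" using lam by (intro sum_nonneg) simp
    finally show "0 \<le> v \<bullet> (R *v v)" .
  qed
  moreover have "R ** R = M"
  proof (rule matrix_eq_on_spanning_set[OF B(2)])
    fix c assume c: "c \<in> B"
    have "(R ** R) *v c = (sqrt (lam c) * sqrt (lam c)) *\<^sub>R c"
      using c by (simp add: R matrix_vector_mult_scaleR flip: matrix_vector_mul_assoc)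
    also have "\<dots> = M *v c" using c lam ev by simp
    finally show "(R ** R) *v c = M *v c" .
  qed
  moreover have "S = R" if "psd_mat S" "S ** S = M" for S
    by (rule matrix_eq_on_spanning_set[OF B(2)])
      (use psd_root_eigenvector[OF that ev lam] R in simp)
  ultimately show ?thesis by blast
qed

lemma psd_mat_psd_sqrt: "psd_mat M \<Longrightarrow> psd_mat (psd_sqrt M)"
  unfolding psd_sqrt_def using theI'[OF psd_mat_sqrt_ex1] by blast

lemma psd_sqrt_square: "psd_mat M \<Longrightarrow> psd_sqrt M ** psd_sqrt M = M"
  unfolding psd_sqrt_def using theI'[OF psd_mat_sqrt_ex1] by blast

lemma psd_sqrt_quadratic_form_le:
  fixes M :: "real^'n^'n"
  assumes M: "psd_mat M" and le: "\<And>v. v \<bullet> (M *v v) \<le> v \<bullet> v"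
  shows "v \<bullet> (psd_sqrt M *v v) \<le> v \<bullet> v"
proof -
  let ?S = "psd_sqrt M"
  have "(?S *v v) \<bullet> (?S *v v) = v \<bullet> (M *v v)"
    using psd_mat_psd_sqrt[OF M] psd_sqrt_square[OF M] symmetric_matrix_inner[of ?S v "?S *v v"]
    by (simp add: psd_mat_def matrix_vector_mul_assoc)
  then have "norm (?S *v v) \<le> norm v"
    using le[of v] by (simp add: norm_le)
  then have "norm v * norm (?S *v v) \<le> norm v * norm v"
    by (simp add: mult_left_mono)
  then show ?thesis
    using norm_cauchy_schwarz[of v "?S *v v"] by (simp add: dot_square_norm power2_eq_square)
qed

lemma psd_sqrt_fixed_vector:
  fixes M :: "real^'n^'n"
  assumes "psd_mat M" and "M *v w = w"
  shows "psd_sqrt M *v w = w"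
  using psd_root_eigenvector[OF psd_mat_psd_sqrt psd_sqrt_square, of M w 1] assms by simp

lemma ceigenvector_real_imag_parts:
  fixes L :: "real^'n^'n"
  assumes "cmat L *v v = \<mu> *s v"
  shows "L *v (\<chi> i. Re (v$i)) = Re \<mu> *\<^sub>R (\<chi> i. Re (v$i)) - Im \<mu> *\<^sub>R (\<chi> i. Im (v$i))"
    and "L *v (\<chi> i. Im (v$i)) = Im \<mu> *\<^sub>R (\<chi> i. Re (v$i)) + Re \<mu> *\<^sub>R (\<chi> i. Im (v$i))"
proof -
  have row: "(\<Sum>j\<in>UNIV. complex_of_real (L$i$j) * v$j) = \<mu> * v$i" for i
    using arg_cong[OF assms, of "\<lambda>w. w $ i"] by (simp add: cmat_def matrix_vector_mult_def)
  show "L *v (\<chi> i. Re (v$i)) = Re \<mu> *\<^sub>R (\<chi> i. Re (v$i)) - Im \<mu> *\<^sub>R (\<chi> i. Im (v$i))"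
    using arg_cong[OF row, of Re] by (simp add: vec_eq_iff matrix_vector_mult_def Re_sum)
  show "L *v (\<chi> i. Im (v$i)) = Im \<mu> *\<^sub>R (\<chi> i. Re (v$i)) + Re \<mu> *\<^sub>R (\<chi> i. Im (v$i))"
    using arg_cong[OF row, of Im] by (simp add: vec_eq_iff matrix_vector_mult_def Im_sum)
qed

text \<open>Split a complex eigenvector into real and imaginary parts a and b; symmetry of L forces
  Im \<mu> (a \<bullet> a + b \<bullet> b) = 0, and the quadratic form at a and b brackets Re \<mu>.\<close>
lemma symmetric_matrix_ceigenvalue_bounds:
  fixes L :: "real^'n^'n"
  assumes sym: "transpose L = L"
    and lower: "\<And>v. lo * (v \<bullet> v) \<le> v \<bullet> (L *v v)"
    and upper: "\<And>v. v \<bullet> (L *v v) \<le> hi * (v \<bullet> v)"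
    and "is_ceigenvalue L \<mu>"
  shows "Im \<mu> = 0 \<and> lo \<le> Re \<mu> \<and> Re \<mu> \<le> hi"
proof -
  obtain v where v: "v \<noteq> 0" "cmat L *v v = \<mu> *s v"
    using assms(4) by (auto simp: is_ceigenvalue_def)
  define a where "a = (\<chi> i. Re (v$i))"
  define b where "b = (\<chi> i. Im (v$i))"
  have La: "L *v a = Re \<mu> *\<^sub>R a - Im \<mu> *\<^sub>R b" and Lb: "L *v b = Im \<mu> *\<^sub>R a + Re \<mu> *\<^sub>R b"
    unfolding a_def b_def by (rule ceigenvector_real_imag_parts[OF v(2)])+
  have "a \<noteq> 0 \<or> b \<noteq> 0"
    using v(1) by (auto simp: a_def b_def vec_eq_iff complex_eq_iff)
  then have pos: "0 < a \<bullet> a + b \<bullet> b"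
    by (metis add_nonneg_pos add_pos_nonneg inner_ge_zero inner_gt_zero_iff)
  have "b \<bullet> (L *v a) = a \<bullet> (L *v b)"
    using symmetric_matrix_inner[OF sym, of a b] by (simp add: inner_commute)
  then have "Im \<mu> * (a \<bullet> a + b \<bullet> b) = 0"
    by (simp add: La Lb inner_diff_right inner_add_right inner_commute algebra_simps)
  then have im: "Im \<mu> = 0" using pos by simp
  have "a \<bullet> (L *v a) + b \<bullet> (L *v b) = Re \<mu> * (a \<bullet> a + b \<bullet> b)"
    using im by (simp add: La Lb algebra_simps)
  moreover have "lo * (a \<bullet> a + b \<bullet> b) \<le> a \<bullet> (L *v a) + b \<bullet> (L *v b)"
    using lower[of a] lower[of b] by (simp add: distrib_left)
  moreover have "a \<bullet> (L *v a) + b \<bullet> (L *v b) \<le> hi * (a \<bullet> a + b \<bullet> b)"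
    using upper[of a] upper[of b] by (simp add: distrib_left)
  ultimately show ?thesis
    using im pos by (simp add: mult_le_cancel_right_pos)
qed

lemma is_ceigenvalue_of_real:
  fixes L :: "real^'n^'n"
  assumes "w \<noteq> 0" and "L *v w = l *\<^sub>R w"
  shows "is_ceigenvalue L (complex_of_real l)"
  unfolding is_ceigenvalue_def
proof (intro exI conjI)
  show "(\<chi> i. complex_of_real (w$i)) \<noteq> 0"
    using assms(1) by (simp add: vec_eq_iff)
  have "(\<Sum>j\<in>UNIV. L$i$j * w$j) = l * w$i" for i
    using arg_cong[OF assms(2), of "\<lambda>v. v $ i"] by (simp add: matrix_vector_mult_def)
  then show "cmat L *v (\<chi> i. complex_of_real (w$i))
      = complex_of_real l *s (\<chi> i. complex_of_real (w$i))"
    by (simp add: vec_eq_iff cmat_def matrix_vector_mult_def flip: of_real_mult of_real_sum)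
qed

lemma identity_minus_psd_sqrt_spectrum:
  fixes M :: "real^'n^'n"
  assumes M: "psd_mat M" and M1: "M *v 1 = 1" and le: "\<And>v. v \<bullet> (M *v v) \<le> v \<bullet> v"
  shows "(\<forall>\<mu>. is_ceigenvalue (mat 1 - psd_sqrt M) \<mu> \<longrightarrow> Im \<mu> = 0 \<and> 0 \<le> Re \<mu> \<and> Re \<mu> \<le> 1)
    \<and> is_ceigenvalue (mat 1 - psd_sqrt M) 0"
proof -
  let ?S = "psd_sqrt M"
  have Lv: "(mat 1 - ?S) *v v = v - ?S *v v" for v
    by (simp add: matrix_vector_mult_diff_rdistrib)
  have "transpose (mat 1 - ?S) = mat 1 - ?S"
    using psd_mat_psd_sqrt[OF M] by (simp add: psd_mat_def transpose_def vec_eq_iff mat_def)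
  moreover have "0 * (v \<bullet> v) \<le> v \<bullet> ((mat 1 - ?S) *v v)" for v
    using psd_sqrt_quadratic_form_le[OF M le, of v] by (simp add: Lv inner_diff_right)
  moreover have "v \<bullet> ((mat 1 - ?S) *v v) \<le> 1 * (v \<bullet> v)" for v
    using psd_mat_psd_sqrt[OF M] by (simp add: Lv inner_diff_right psd_mat_def)
  ultimately have real_bounds: "Im \<mu> = 0 \<and> 0 \<le> Re \<mu> \<and> Re \<mu> \<le> 1"
    if "is_ceigenvalue (mat 1 - ?S) \<mu>" for \<mu>
    using symmetric_matrix_ceigenvalue_bounds that by blast
  have "(mat 1 - ?S) *v 1 = 0 *\<^sub>R 1"
    using psd_sqrt_fixed_vector[OF M M1] by (simp add: Lv)
  then have "is_ceigenvalue (mat 1 - ?S) 0"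
    using is_ceigenvalue_of_real[of 1 "mat 1 - ?S" 0] by (simp add: vec_eq_iff)
  with real_bounds show ?thesis by blast
qed

lemma weighted_Cauchy_Schwarz_sum:
  fixes w a :: "'i \<Rightarrow> real"
  assumes "\<And>i. i \<in> I \<Longrightarrow> 0 \<le> w i"
  shows "(\<Sum>i\<in>I. w i * a i)\<^sup>2 \<le> (\<Sum>i\<in>I. w i) * (\<Sum>i\<in>I. w i * (a i)\<^sup>2)"
proof -
  have "(\<Sum>i\<in>I. w i * a i) = (\<Sum>i\<in>I. sqrt (w i) * (sqrt (w i) * a i))"
    using assms by (intro sum.cong) (simp_all flip: mult.assoc)
  moreover have "(\<Sum>i\<in>I. w i) = (\<Sum>i\<in>I. (sqrt (w i))\<^sup>2)"
    using assms by (intro sum.cong) simp_all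
  moreover have "(\<Sum>i\<in>I. w i * (a i)\<^sup>2) = (\<Sum>i\<in>I. (sqrt (w i) * a i)\<^sup>2)"
    using assms by (intro sum.cong) (simp_all add: power_mult_distrib)
  ultimately show ?thesis
    using Cauchy_Schwarz_ineq_sum[of "\<lambda>i. sqrt (w i)" "\<lambda>i. sqrt (w i) * a i" I] by simp
qed

definition diag_mat :: "('n::finite \<Rightarrow> 'a::zero) \<Rightarrow> 'a^'n^'n" where
  "diag_mat d = (\<chi> i j. if i = j then d i else 0)"

lemma diag_mat_mult_vector: "diag_mat d *v v = (\<chi> i. d i * v$i)"
  by (simp add: diag_mat_def matrix_vector_mult_def vec_eq_iff if_distrib[of "\<lambda>x. x * _"]
      cong: if_cong)

lemma diag_mat_mult: "diag_mat d ** diag_mat e = diag_mat (\<lambda>i. d i * e i)"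
  by (simp add: diag_mat_def matrix_matrix_mult_def vec_eq_iff if_distrib[of "\<lambda>x. x * _"]
      cong: if_cong)

lemma transpose_diag_mat: "transpose (diag_mat d) = diag_mat d"
  by (simp add: diag_mat_def transpose_def vec_eq_iff)

lemma matrix_inv_eqI:
  fixes A B :: "'a::semiring_1^'n^'n"
  assumes AB: "A ** B = mat 1" and BA: "B ** A = mat 1"
  shows "matrix_inv A = B"
proof -
  have inv: "A ** matrix_inv A = mat 1 \<and> matrix_inv A ** A = mat 1"
    unfolding matrix_inv_def by (rule someI[of _ B]) (simp add: AB BA)
  have "matrix_inv A = matrix_inv A ** (A ** B)" by (simp add: AB)
  also have "\<dots> = (matrix_inv A ** A) ** B" by (rule matrix_mul_assoc)
  also have "\<dots> = B" using inv by simp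
  finally show ?thesis .
qed

lemma matrix_inv_diag_mat:
  fixes d :: "'n::finite \<Rightarrow> 'a::field"
  assumes "\<And>i. d i \<noteq> 0"
  shows "matrix_inv (diag_mat d) = diag_mat (\<lambda>i. inverse (d i))"
  by (rule matrix_inv_eqI) (simp_all add: diag_mat_mult assms, simp_all add: diag_mat_def mat_def)

definition anchor_graph_adjacency :: "real^'s^'n \<Rightarrow> real^'n^'n" where
  "anchor_graph_adjacency Z =
    Z ** diag_mat (\<lambda>l. inverse (\<Sum>i\<in>UNIV. Z$i$l)) ** transpose Z"

lemma anchor_graph_adjacency_quadratic_form:
  "v \<bullet> (anchor_graph_adjacency Z *v v) =
    (\<Sum>l\<in>UNIV. ((transpose Z *v v)$l)\<^sup>2 / (\<Sum>i\<in>UNIV. Z$i$l))"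
proof -
  have "v \<bullet> (anchor_graph_adjacency Z *v v) =
      (transpose Z *v v) \<bullet> (diag_mat (\<lambda>l. inverse (\<Sum>i\<in>UNIV. Z$i$l)) *v (transpose Z *v v))"
    unfolding anchor_graph_adjacency_def
    by (simp only: inner_matrix_vector_mult flip: matrix_vector_mul_assoc)
  then show ?thesis
    by (simp add: diag_mat_mult_vector inner_vec_def power2_eq_square divide_inverse mult_ac)
qed

lemma anchor_graph_adjacency_psd:
  assumes "\<And>i j. 0 \<le> Z$i$j"
  shows "psd_mat (anchor_graph_adjacency Z)"
  unfolding psd_mat_def
proof (intro conjI allI)
  show "transpose (anchor_graph_adjacency Z) = anchor_graph_adjacency Z"
    by (simp add: anchor_graph_adjacency_def matrix_transpose_mul transpose_diag_mat
        matrix_mul_assoc)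
  show "0 \<le> v \<bullet> (anchor_graph_adjacency Z *v v)" for v
    unfolding anchor_graph_adjacency_quadratic_form
    using assms by (intro sum_nonneg divide_nonneg_nonneg sum_nonneg) simp_all
qed

lemma anchor_graph_adjacency_ones:
  assumes rows: "\<And>i. (\<Sum>j\<in>UNIV. Z$i$j) = 1" and cols: "\<And>j. (\<Sum>i\<in>UNIV. Z$i$j) \<noteq> 0"
  shows "anchor_graph_adjacency Z *v 1 = 1"
proof -
  have "transpose Z *v 1 = (\<chi> j. \<Sum>i\<in>UNIV. Z$i$j)"
    by (simp add: vec_eq_iff vector_matrix_mult_def)
  then have "diag_mat (\<lambda>l. inverse (\<Sum>i\<in>UNIV. Z$i$l)) *v (transpose Z *v 1) = 1"
    using cols by (simp add: diag_mat_mult_vector vec_eq_iff)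
  moreover have "Z *v 1 = 1"
    using rows by (simp add: vec_eq_iff matrix_vector_mult_def)
  ultimately show ?thesis
    by (simp only: anchor_graph_adjacency_def flip: matrix_vector_mul_assoc)
qed

lemma anchor_graph_adjacency_quadratic_form_le:
  assumes nonneg: "\<And>i j. 0 \<le> Z$i$j" and rows: "\<And>i. (\<Sum>j\<in>UNIV. Z$i$j) = 1"
  shows "v \<bullet> (anchor_graph_adjacency Z *v v) \<le> v \<bullet> v"
proof -
  have "((transpose Z *v v)$l)\<^sup>2 / (\<Sum>i\<in>UNIV. Z$i$l) \<le> (\<Sum>i\<in>UNIV. Z$i$l * (v$i)\<^sup>2)"
    (is "?y\<^sup>2 / ?d \<le> ?q") for l
  proof (cases "?d = 0")
    case False
    have "?y = (\<Sum>i\<in>UNIV. Z$i$l * v$i)"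
      by (simp add: vector_matrix_mult_def mult.commute)
    then have "?y\<^sup>2 \<le> ?d * ?q"
      using weighted_Cauchy_Schwarz_sum[of UNIV "\<lambda>i. Z$i$l" "\<lambda>i. v$i"] nonneg by simp
    moreover have "0 < ?d"
      using False sum_nonneg[of UNIV "\<lambda>i. Z$i$l"] nonneg by fastforce
    ultimately show ?thesis
      by (simp add: pos_divide_le_eq mult.commute)
  qed (simp add: nonneg sum_nonneg)
  then have "v \<bullet> (anchor_graph_adjacency Z *v v) \<le> (\<Sum>l\<in>UNIV. \<Sum>i\<in>UNIV. Z$i$l * (v$i)\<^sup>2)"
    unfolding anchor_graph_adjacency_quadratic_form by (rule sum_mono)
  also have "\<dots> = (\<Sum>i\<in>UNIV. \<Sum>l\<in>UNIV. Z$i$l * (v$i)\<^sup>2)"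
    by (rule sum.swap)
  also have "\<dots> = v \<bullet> v"
    by (simp add: rows inner_vec_def power2_eq_square flip: sum_distrib_right)
  finally show ?thesis .
qed

lemma Z_mat_nonneg:
  assumes "\<forall>a b. 0 \<le> k a b"
  shows "0 \<le> Z_mat k x u c $ i $ j"
  using assms by (simp add: Z_mat_def A_mat_def sum_nonneg)

lemma Z_mat_row_sum:
  assumes "(\<Sum>l\<in>UNIV. A_mat k x u c $ i $ l) \<noteq> 0"
  shows "(\<Sum>j\<in>UNIV. Z_mat k x u c $ i $ j) = 1"
  using assms by (simp add: Z_mat_def flip: sum_divide_distrib)

lemma Lambda_mat_eq_diag_mat:
  "Lambda_mat k x u c = diag_mat (\<lambda>j. \<Sum>i\<in>UNIV. Z_mat k x u c $ i $ j)"
  by (simp add: Lambda_mat_def diag_mat_def)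

theorem proposition1:
  fixes x :: "'n::finite \<Rightarrow> real^'p::finite"
    and u :: "'s::finite \<Rightarrow> real^'p"
    and c :: "'n \<Rightarrow> 's"
    and k :: "real^'p \<Rightarrow> real^'p \<Rightarrow> real"
  assumes u_from_x: "\<forall>j. \<exists>i. u j = x i"
    and nearest: "\<forall>i q. dist (x i) (u (c i)) \<le> dist (x i) (u q)"
    and k_nonneg: "\<forall>a b. 0 \<le> k a b"
    and pos1: "\<forall>j. 0 < (\<Sum>q\<in>UNIV. k (x q) (u j))"
    and pos2: "\<forall>i. 0 < (\<Sum>q\<in>UNIV. real (cluster_size c q) * k (x i) (u q))"
    and pos3: "\<forall>i. 0 < (\<Sum>l\<in>UNIV. A_mat k x u c $ i $ l)"
    and pos4: "\<forall>j. 0 < (\<Sum>i\<in>UNIV. Z_mat k x u c $ i $ j)"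
  shows "(\<forall>\<mu>. is_ceigenvalue (L_mat k x u c) \<mu> \<longrightarrow>
            Im \<mu> = 0 \<and> 0 \<le> Re \<mu> \<and> Re \<mu> \<le> 1)
         \<and> is_ceigenvalue (L_mat k x u c) 0"
proof -
  define Z where "Z = Z_mat k x u c"
  have nonneg: "\<And>i j. 0 \<le> Z$i$j"
    unfolding Z_def using k_nonneg by (rule Z_mat_nonneg)
  have rows: "\<And>i. (\<Sum>j\<in>UNIV. Z$i$j) = 1"
    unfolding Z_def using pos3 by (intro Z_mat_row_sum) (metis less_irrefl)
  have cols: "\<And>j. (\<Sum>i\<in>UNIV. Z$i$j) \<noteq> 0"
    unfolding Z_def using pos4 by (metis less_irrefl)
  have "L_mat k x u c = mat 1 - psd_sqrt (anchor_graph_adjacency Z)"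
    using cols by (simp add: L_mat_def Lambda_mat_eq_diag_mat matrix_inv_diag_mat
        anchor_graph_adjacency_def Z_def)
  then show ?thesis
    using identity_minus_psd_sqrt_spectrum[OF anchor_graph_adjacency_psd[OF nonneg]
        anchor_graph_adjacency_ones[OF rows cols]
        anchor_graph_adjacency_quadratic_form_le[OF nonneg rows]]
    by simp
qed

end
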